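(* Let $V$ be a finite-dimensional complex vector space and $M:\mathbb C\to GL(V)$ a rational function such that $[M(u),M(v)]=0$ for all $u,v\in\mathbb C$. Let $M(u)=M_S(u)M_U(u)$ be the multiplicative Jordan decomposition of $M(u)$ into commuting semisimple and unipotent parts. Then $M_S$ and $M_U$ are rational functions of $u$. *)

theory Defs
  imports "HOL-Analysis.Analysis" "HOL-Computational_Algebra.Polynomial"
begin

text \<open>Endomorphisms of a finite-dimensional complex vector space V = C^'n are
  represented as matrices of type complex^'n::finite^'n (matrix product is **).\<close>

text \<open>A matrix-valued function of u is rational if all its entries are rational
  functions with a common denominator q (a nonzero polynomial), i.e. it agrees with
  P(u)/q(u) wherever q(u) is nonzero.\<close>
definition rational_mat_fun :: "(complex \<Rightarrow> complex^'n::finite^'n) \<Rightarrow> bool" where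
  "rational_mat_fun M \<longleftrightarrow>
     (\<exists>(p :: 'n \<Rightarrow> 'n \<Rightarrow> complex poly) (q :: complex poly). q \<noteq> 0 \<and>
        (\<forall>u. poly q u \<noteq> 0 \<longrightarrow> (\<forall>i j. M u $ i $ j = poly (p i j) u / poly q u)))"

definition semisimple_mat :: "complex^'n::finite^'n \<Rightarrow> bool" where
  "semisimple_mat A \<longleftrightarrow>
     (\<exists>(P :: complex^'n^'n) (D :: complex^'n^'n). invertible P \<and> (\<forall>i j. i \<noteq> j \<longrightarrow> D $ i $ j = 0) \<and> A = P ** D ** matrix_inv P)"

definition matpow :: "complex^'n::finite^'n \<Rightarrow> nat \<Rightarrow> complex^'n::finite^'n" where
  "matpow A k = ((\<lambda>B. A ** B) ^^ k) (mat 1)"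

definition unipotent_mat :: "complex^'n::finite^'n \<Rightarrow> bool" where
  "unipotent_mat A \<longleftrightarrow> (\<exists>k. matpow (A - mat 1) k = 0)"

end

theory Submission
  imports Defs
begin

text \<open>
  Finitely many members \<open>M(t)\<close> span the linear span of the family, and likewise for the
  semisimple parts, which commute with each other because the semisimple part of a matrix
  commutes with everything that commutes with the matrix.  Simultaneous diagonalisation of
  finitely many commuting semisimple matrices gives a basis \<open>X\<close> of common eigenvectors of all
  \<open>M\<^sub>S(u)\<close>.  For \<open>w \<in> X\<close>, the joint eigenspace of the \<open>M\<^sub>S(t)\<close> through \<open>w\<close> is invariant under
  the commuting operators \<open>M(t)\<close>, which act on it as scalars plus commuting nilpotents; a common
  kernel vector \<open>z\<close> of these nilpotents is a common eigenvector of all \<open>M(u)\<close>.  Since a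
  generalised eigenvector of \<open>M(u)\<close> is an eigenvector of \<open>M\<^sub>S(u)\<close> for the same eigenvalue, the
  eigenvalue of \<open>M\<^sub>S(u)\<close> on \<open>w\<close> is \<open>(M(u) z)\<^sub>a / z\<^sub>a\<close> for any coordinate with \<open>z\<^sub>a \<noteq> 0\<close>, a rational
  function of \<open>u\<close>.  So \<open>M\<^sub>S\<close>, and likewise its inverse, is diagonal in the fixed basis \<open>X\<close>
  with rational eigenvalues, hence rational, and then so is \<open>M\<^sub>U(u) = M\<^sub>S(u)\<inverse> M(u)\<close>.
\<close>

section \<open>Matrix--vector algebra\<close>

lemma sum_UNIV_eq_single:
  fixes f :: "'a::finite \<Rightarrow> 'b::comm_monoid_add"
  assumes "\<And>k. k \<noteq> j \<Longrightarrow> f k = 0"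
  shows "sum f UNIV = f j"
  using assms by (subst sum.remove[of UNIV j]) (auto intro: sum.neutral)

lemma matrix_vector_mul_mat: "mat c *v x = c *s (x::'a::comm_semiring_1^'n::finite)"
  unfolding vec_eq_iff matrix_vector_mult_def mat_def
  by (auto intro: trans[OF sum_UNIV_eq_single])

lemma matrix_vector_mul_sum:
  "(A::'a::field^'n::finite^'m::finite) *v sum f X = (\<Sum>x\<in>X. A *v f x)"
  by (rule vec.linear_sum[OF matrix_vector_mul_linear_gen])

lemma matrix_entry_axis: "(A::'a::field^'n::finite^'m::finite) $ i $ k = (A *v axis k 1) $ i"
  by (simp add: matrix_vector_mult_def axis_def, subst sum_UNIV_eq_single[of k]) auto

lemma commuting_matrix_vector_mul: "A ** B = B ** A \<Longrightarrow> A *v (B *v x) = B *v (A *v x)"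
  by (metis matrix_vector_mul_assoc)

lemma commute_diff_mat:
  fixes A B :: "'a::field^'n::finite^'n"
  assumes "A ** B = B ** A"
  shows "(A - mat c) ** B = B ** (A - mat c)"
  using commuting_matrix_vector_mul[OF assms]
  by (simp add: matrix_eq matrix_vector_mul_assoc[symmetric] matrix_vector_mult_diff_rdistrib
      matrix_vector_mult_diff_distrib matrix_vector_mul_mat vector_scalar_commute)

lemma funpow_matrix_vector_commute:
  "A ** B = B ** A \<Longrightarrow> ((*v) A ^^ k) (B *v x) = B *v (((*v) A ^^ k) x)"
  by (induction k) (simp_all add: commuting_matrix_vector_mul)

lemma funpow_matrix_vector_scale:
  "((*v) (A::'a::field^'n::finite^'n) ^^ k) (c *s x) = c *s (((*v) A ^^ k) x)"
  by (induction k) (simp_all add: vector_scalar_commute)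

lemma funpow_matrix_vector_zero: "((*v) (A::'a::field^'n::finite^'n) ^^ k) 0 = 0"
  by (induction k) simp_all

lemma funpow_matrix_vector_eigenvector:
  fixes A :: "'a::field^'n::finite^'n"
  assumes "A *v x = c *s x"
  shows "((*v) A ^^ k) x = c ^ k *s x"
  by (induction k) (simp_all add: assms vector_scalar_commute mult.commute)

lemma matpow_matrix_vector_mul: "matpow A k *v x = ((*v) A ^^ k) x"
  by (induction k) (simp_all add: matpow_def matrix_vector_mul_assoc[symmetric])

lemma matrix_inv_left: "invertible A \<Longrightarrow> matrix_inv A ** A = mat 1"
  and matrix_inv_right: "invertible A \<Longrightarrow> A ** matrix_inv A = mat 1"
  unfolding invertible_def matrix_inv_def by (metis (mono_tags, lifting) someI_ex)+

lemma invertible_mult_left: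
  fixes A B :: "'a::field^'n::finite^'n"
  assumes "invertible (A ** B)"
  shows "invertible A"
  using assms by (metis invertible_right_inverse matrix_mul_assoc)

lemma matrix_inv_eigenvector:
  fixes A :: "'a::field^'n::finite^'n"
  assumes "invertible A" and Aw: "A *v w = c *s w" and "w \<noteq> 0"
  shows "c \<noteq> 0" and "matrix_inv A *v w = (1 / c) *s w"
proof -
  have w: "w = c *s (matrix_inv A *v w)"
    by (metis Aw matrix_inv_left[OF assms(1)] matrix_vector_mul_assoc matrix_vector_mul_lid
        vector_scalar_commute)
  then show "c \<noteq> 0" using \<open>w \<noteq> 0\<close> by auto
  then show "matrix_inv A *v w = (1 / c) *s w" by (subst (2) w) simp
qed

lemma eigenvector_combination:
  fixes B :: "'a::field^'n::finite^'n"
  assumes "\<And>x. B *v x = (\<Sum>t\<in>T. c t *s (A t *v x))" and "\<And>t. t \<in> T \<Longrightarrow> A t *v w = l t *s w"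
  shows "B *v w = (\<Sum>t\<in>T. c t * l t) *s w"
  using assms by (simp add: vec_eq_iff sum_distrib_right mult.assoc)

section \<open>Rational functions\<close>

definition rational_fun :: "(complex \<Rightarrow> complex) \<Rightarrow> bool" where
  "rational_fun f \<longleftrightarrow> (\<exists>p q. q \<noteq> 0 \<and> (\<forall>u. poly q u \<noteq> 0 \<longrightarrow> f u = poly p u / poly q u))"

lemma rational_fun_const: "rational_fun (\<lambda>u. c)"
  unfolding rational_fun_def by (rule exI[of _ "[:c:]"], rule exI[of _ 1]) simp

lemma rational_fun_add:
  assumes "rational_fun f" "rational_fun g"
  shows "rational_fun (\<lambda>u. f u + g u)"
proof -
  obtain p1 q1 where 1: "q1 \<noteq> 0" "\<And>u. poly q1 u \<noteq> 0 \<Longrightarrow> f u = poly p1 u / poly q1 u"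
    using assms(1) unfolding rational_fun_def by blast
  obtain p2 q2 where 2: "q2 \<noteq> 0" "\<And>u. poly q2 u \<noteq> 0 \<Longrightarrow> g u = poly p2 u / poly q2 u"
    using assms(2) unfolding rational_fun_def by blast
  show ?thesis unfolding rational_fun_def
    by (rule exI[of _ "p1 * q2 + p2 * q1"], rule exI[of _ "q1 * q2"]) (use 1 2 in \<open>auto simp: field_simps\<close>)
qed

lemma rational_fun_mult:
  assumes "rational_fun f" "rational_fun g"
  shows "rational_fun (\<lambda>u. f u * g u)"
proof -
  obtain p1 q1 where 1: "q1 \<noteq> 0" "\<And>u. poly q1 u \<noteq> 0 \<Longrightarrow> f u = poly p1 u / poly q1 u"
    using assms(1) unfolding rational_fun_def by blast
  obtain p2 q2 where 2: "q2 \<noteq> 0" "\<And>u. poly q2 u \<noteq> 0 \<Longrightarrow> g u = poly p2 u / poly q2 u"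
    using assms(2) unfolding rational_fun_def by blast
  show ?thesis unfolding rational_fun_def
    by (rule exI[of _ "p1 * p2"], rule exI[of _ "q1 * q2"]) (use 1 2 in \<open>auto simp: field_simps\<close>)
qed

lemma rational_fun_sum:
  assumes "\<And>a. a \<in> A \<Longrightarrow> rational_fun (f a)"
  shows "rational_fun (\<lambda>u. \<Sum>a\<in>A. f a u)"
proof (cases "finite A")
  case True
  then show ?thesis using assms
    by (induction A rule: finite_induct) (auto simp: rational_fun_const intro!: rational_fun_add)
qed (simp add: rational_fun_const)

lemma rational_fun_inverse:
  assumes "rational_fun f" "\<And>u. f u \<noteq> 0"
  shows "rational_fun (\<lambda>u. 1 / f u)"
proof -
  obtain p q where pq: "q \<noteq> 0" "\<And>u. poly q u \<noteq> 0 \<Longrightarrow> f u = poly p u / poly q u"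
    using assms(1) unfolding rational_fun_def by blast
  obtain u0 where "poly q u0 \<noteq> 0" using pq(1) poly_all_0_iff_0 by blast
  then have "p \<noteq> 0" using pq(2) assms(2) by force
  show ?thesis unfolding rational_fun_def
    by (rule exI[of _ "q * q"], rule exI[of _ "p * q"]) (use pq \<open>p \<noteq> 0\<close> assms(2) in \<open>auto simp: field_simps\<close>)
qed

lemma rational_mat_fun_entry: "rational_mat_fun F \<Longrightarrow> rational_fun (\<lambda>u. F u $ i $ j)"
  unfolding rational_mat_fun_def rational_fun_def by blast

lemma rational_fun_matrix_vector_coordinate:
  assumes "rational_mat_fun M"
  shows "rational_fun (\<lambda>u. (M u *v z) $ a / c)"
proof -
  have "(\<lambda>u. (M u *v z) $ a / c) = (\<lambda>u. \<Sum>j\<in>UNIV. M u $ a $ j * (z $ j / c))"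
    by (auto simp: matrix_vector_mult_def sum_divide_distrib)
  then show ?thesis
    by (simp only:) (intro rational_fun_sum rational_fun_mult rational_fun_const rational_mat_fun_entry[OF assms])
qed

text \<open>The entrywise denominators are multiplied into one common denominator.\<close>
lemma rational_mat_funI:
  fixes F :: "complex \<Rightarrow> complex^'n::finite^'n"
  assumes "\<And>i j. rational_fun (\<lambda>u. F u $ i $ j)"
  shows "rational_mat_fun F"
proof -
  obtain P Q where Q: "\<And>i j. Q i j \<noteq> 0"
    and PQ: "\<And>i j u. poly (Q i j) u \<noteq> 0 \<Longrightarrow> F u $ i $ j = poly (P i j) u / poly (Q i j) u"
    using assms unfolding rational_fun_def by metis
  define q where "q = (\<Prod>k\<in>UNIV. Q (fst k) (snd k))"
  define R where "R i j = (\<Prod>k\<in>UNIV - {(i, j)}. Q (fst k) (snd k))" for i j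
  have qR: "q = Q i j * R i j" for i j
    unfolding q_def R_def by (subst prod.remove[of UNIV "(i, j)"]) simp_all
  have "q \<noteq> 0" unfolding q_def by (simp add: Q)
  moreover have "F u $ i $ j = poly (P i j * R i j) u / poly q u" if "poly q u \<noteq> 0" for u i j
  proof -
    have "poly (Q i j) u \<noteq> 0" "poly (R i j) u \<noteq> 0" using that qR[of i j] by auto
    then show ?thesis by (simp add: PQ qR[of i j])
  qed
  ultimately show ?thesis unfolding rational_mat_fun_def
    by (intro exI[of _ "\<lambda>i j. P i j * R i j"] exI[of _ q]) blast
qed

lemma rational_mat_fun_mult:
  assumes "rational_mat_fun F" "rational_mat_fun G"
  shows "rational_mat_fun (\<lambda>u. F u ** G u)"
  by (intro rational_mat_funI)
    (simp add: matrix_matrix_mult_def rational_fun_sum rational_fun_mult rational_mat_fun_entry assms)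

section \<open>Spectral projections of a semisimple matrix\<close>

lemma diagonal_matrix_mult_right:
  fixes A D :: "'a::semiring_1^'n::finite^'n"
  assumes "\<And>i j. i \<noteq> j \<Longrightarrow> D $ i $ j = 0"
  shows "(A ** D) $ i $ j = A $ i $ j * D $ j $ j"
  unfolding matrix_matrix_mult_def using assms by (auto intro: sum_UNIV_eq_single)

lemma diagonal_matrix_mult_left:
  fixes A D :: "'a::semiring_1^'n::finite^'n"
  assumes "\<And>i j. i \<noteq> j \<Longrightarrow> D $ i $ j = 0"
  shows "(D ** A) $ i $ j = D $ i $ i * A $ i $ j"
  unfolding matrix_matrix_mult_def using assms by (auto intro: sum_UNIV_eq_single)

lemma diagonal_matrix_vector_mul:
  fixes D :: "'a::semiring_1^'n::finite^'n"
  assumes "\<And>i j. i \<noteq> j \<Longrightarrow> D $ i $ j = 0"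
  shows "(D *v x) $ i = D $ i $ i * x $ i"
  unfolding matrix_vector_mult_def using assms by (auto intro: sum_UNIV_eq_single)

definition diag_eigenprojection :: "'a::semiring_1^'n::finite^'n \<Rightarrow> 'a \<Rightarrow> 'a^'n^'n" where
  "diag_eigenprojection D \<mu> = (\<chi> i j. if i = j \<and> D $ i $ i = \<mu> then 1 else 0)"

lemma diag_eigenprojection_apply:
  "(diag_eigenprojection D \<mu> *v x) $ i = (if D $ i $ i = \<mu> then x $ i else 0)"
  by (subst diagonal_matrix_vector_mul) (auto simp: diag_eigenprojection_def)

lemma diag_eigenprojection_eigenvector:
  assumes "\<And>i j. i \<noteq> j \<Longrightarrow> D $ i $ j = 0"
  shows "D *v (diag_eigenprojection D \<mu> *v x) = \<mu> *s (diag_eigenprojection D \<mu> *v x)"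
  by (simp add: vec_eq_iff diagonal_matrix_vector_mul[OF assms] diag_eigenprojection_apply)

lemma sum_diag_eigenprojection:
  "(\<Sum>\<mu>\<in>range (\<lambda>i. D $ i $ i). diag_eigenprojection D \<mu> *v x) = x"
  by (simp add: vec_eq_iff sum_component diag_eigenprojection_apply)

lemma diag_eigenprojection_commute:
  fixes D Y :: "'a::idom^'n::finite^'n"
  assumes D: "\<And>i j. i \<noteq> j \<Longrightarrow> D $ i $ j = 0" and YD: "Y ** D = D ** Y"
  shows "Y ** diag_eigenprojection D \<mu> = diag_eigenprojection D \<mu> ** Y"
proof -
  let ?E = "diag_eigenprojection D \<mu>"
  have E: "\<And>i j. i \<noteq> j \<Longrightarrow> ?E $ i $ j = 0" by (simp add: diag_eigenprojection_def)
  have "Y $ i $ j * D $ j $ j = D $ i $ i * Y $ i $ j" for i j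
    using arg_cong[OF YD, of "\<lambda>A. A $ i $ j"]
    by (simp add: diagonal_matrix_mult_right[OF D] diagonal_matrix_mult_left[OF D])
  then have "Y $ i $ j \<noteq> 0 \<Longrightarrow> D $ j $ j = D $ i $ i" for i j
    by (metis mult.commute mult_cancel_left)
  then have "Y $ i $ j * ?E $ j $ j = ?E $ i $ i * Y $ i $ j" for i j
    by (cases "Y $ i $ j = 0") (auto simp: diag_eigenprojection_def)
  then show ?thesis
    by (simp add: vec_eq_iff diagonal_matrix_mult_right[OF E] diagonal_matrix_mult_left[OF E])
qed

lemma semisimple_spectral_projections:
  fixes S :: "complex^'n::finite^'n"
  assumes "semisimple_mat S"
  obtains Pr :: "complex \<Rightarrow> complex^'n^'n" and L :: "complex set"
  where "finite L"
    and "\<And>\<mu> x. S *v (Pr \<mu> *v x) = \<mu> *s (Pr \<mu> *v x)"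
    and "\<And>x. (\<Sum>\<mu>\<in>L. Pr \<mu> *v x) = x"
    and "\<And>Y \<mu>. Y ** S = S ** Y \<Longrightarrow> Y ** Pr \<mu> = Pr \<mu> ** Y"
proof -
  obtain P D :: "complex^'n^'n" where P: "invertible P"
    and D: "\<And>i j. i \<noteq> j \<Longrightarrow> D $ i $ j = 0" and S: "S = P ** D ** matrix_inv P"
    using assms unfolding semisimple_mat_def by blast
  define Q where "Q = matrix_inv P"
  have PQ: "P ** Q = mat 1" "Q ** P = mat 1"
    using P by (simp_all add: Q_def matrix_inv_left matrix_inv_right)
  then have PQ': "P ** (Q ** X) = X" "Q ** (P ** X) = X" for X
    by (metis matrix_mul_assoc matrix_mul_lid)+
  have QP_vec: "Q *v (P *v x) = x" for x by (simp add: matrix_vector_mul_assoc PQ)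
  define Pr where "Pr \<mu> = P ** diag_eigenprojection D \<mu> ** Q" for \<mu>
  have "S *v (Pr \<mu> *v x) = \<mu> *s (Pr \<mu> *v x)" for \<mu> x
    by (simp add: S Pr_def Q_def[symmetric] matrix_vector_mul_assoc[symmetric] QP_vec
        diag_eigenprojection_eigenvector[OF D] vector_scalar_commute)
  moreover have "(\<Sum>\<mu>\<in>range (\<lambda>i. D $ i $ i). Pr \<mu> *v x) = x" for x
    by (simp add: Pr_def matrix_vector_mul_assoc[symmetric] matrix_vector_mul_sum[symmetric]
        sum_diag_eigenprojection) (simp add: matrix_vector_mul_assoc PQ)
  moreover have "Y ** Pr \<mu> = Pr \<mu> ** Y" if YS: "Y ** S = S ** Y" for Y \<mu>
  proof -
    define Y' where "Y' = Q ** Y ** P"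
    have "Y' ** D = Q ** (Y ** S) ** P"
      by (simp add: Y'_def S Q_def[symmetric] matrix_mul_assoc[symmetric] PQ)
    also have "\<dots> = Q ** (S ** Y) ** P" by (simp add: YS)
    also have "\<dots> = D ** Y'"
      by (simp add: Y'_def S Q_def[symmetric] matrix_mul_assoc[symmetric] PQ')
    finally have Y'E: "Y' ** diag_eigenprojection D \<mu> = diag_eigenprojection D \<mu> ** Y'"
      by (intro diag_eigenprojection_commute D)
    have "Y ** Pr \<mu> = P ** (Y' ** diag_eigenprojection D \<mu>) ** Q"
      by (simp add: Y'_def Pr_def matrix_mul_assoc[symmetric] PQ')
    also have "\<dots> = P ** (diag_eigenprojection D \<mu> ** Y') ** Q" by (simp only: Y'E)
    also have "\<dots> = Pr \<mu> ** Y" by (simp add: Y'_def Pr_def matrix_mul_assoc[symmetric] PQ)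
    finally show ?thesis .
  qed
  ultimately show ?thesis by (intro that[of "range (\<lambda>i. D $ i $ i)" Pr]) auto
qed

section \<open>The multiplicative Jordan decomposition\<close>

definition mult_jordan_decomp ::
    "complex^'n::finite^'n \<Rightarrow> complex^'n^'n \<Rightarrow> complex^'n^'n \<Rightarrow> bool" where
  "mult_jordan_decomp S U A \<longleftrightarrow>
     semisimple_mat S \<and> unipotent_mat U \<and> S ** U = U ** S \<and> A = S ** U"

lemma mult_jordan_decomp_commute: "mult_jordan_decomp S U A \<Longrightarrow> A ** S = S ** A"
  unfolding mult_jordan_decomp_def by (metis matrix_mul_assoc)

lemma unipotent_eigenvalue:
  fixes U :: "complex^'n::finite^'n"
  assumes "unipotent_mat U" and "U *v z = c *s z" and "z \<noteq> 0"
  shows "c = 1"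
proof -
  obtain m where m: "matpow (U - mat 1) m = 0"
    using assms(1) unfolding unipotent_mat_def by blast
  have "(U - mat 1) *v z = (c - 1) *s z"
    using assms(2) by (simp add: matrix_vector_mult_diff_rdistrib matrix_vector_mul_mat vec_eq_iff algebra_simps)
  then have "(c - 1) ^ m *s z = 0"
    using m by (metis funpow_matrix_vector_eigenvector matpow_matrix_vector_mul matrix_vector_mult_0)
  then show "c = 1" using assms(3) by simp
qed

lemma jordan_decomp_eigenvalue_unique:
  assumes J: "mult_jordan_decomp S U A"
    and S: "S *v z = \<mu> *s z" and A: "A *v z = \<nu> *s z" and "z \<noteq> 0"
  shows "\<mu> = \<nu>"
proof -
  have "A *v z = U *v (S *v z)"
    using J by (simp add: mult_jordan_decomp_def matrix_vector_mul_assoc)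
  then have U: "\<mu> *s (U *v z) = \<nu> *s z" by (simp add: A S vector_scalar_commute)
  show ?thesis
  proof (cases "\<mu> = 0")
    case True
    then show ?thesis using U \<open>z \<noteq> 0\<close> by simp
  next
    case False
    then have "U *v z = (\<nu> / \<mu>) *s z"
      using arg_cong[OF U, of "(*s) (1 / \<mu>)"] by simp
    then have "\<nu> / \<mu> = 1"
      using J \<open>z \<noteq> 0\<close> by (intro unipotent_eigenvalue[of U]) (auto simp: mult_jordan_decomp_def)
    then show ?thesis using False by simp
  qed
qed

lemma jordan_decomp_gen_eigenvector_zero:
  assumes J: "mult_jordan_decomp S U A" and "\<mu> \<noteq> \<nu>"
  shows "S *v z = \<mu> *s z \<Longrightarrow> ((*v) (A - mat \<nu>) ^^ k) z = 0 \<Longrightarrow> z = 0"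
proof (induction k arbitrary: z)
  case (Suc k)
  let ?T = "A - mat \<nu>"
  have "?T ** S = S ** ?T" by (rule commute_diff_mat[OF mult_jordan_decomp_commute[OF J]])
  then have "S *v (?T *v z) = \<mu> *s (?T *v z)"
    using Suc.prems(1) by (metis commuting_matrix_vector_mul vector_scalar_commute)
  moreover have "((*v) ?T ^^ k) (?T *v z) = 0"
    using Suc.prems(2) by (simp add: funpow_Suc_right del: funpow.simps)
  ultimately have "?T *v z = 0" by (rule Suc.IH)
  then have "A *v z = \<nu> *s z" by (simp add: matrix_vector_mult_diff_rdistrib matrix_vector_mul_mat)
  then show "z = 0" using jordan_decomp_eigenvalue_unique[OF J Suc.prems(1)] assms(2) by blast
qed simp

lemma jordan_decomp_gen_eigenvector:
  assumes J: "mult_jordan_decomp S U A" and v: "((*v) (A - mat \<nu>) ^^ k) v = 0"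
  shows "S *v v = \<nu> *s v"
proof -
  obtain Pr L where eigen: "\<And>\<mu> x. S *v (Pr \<mu> *v x) = \<mu> *s (Pr \<mu> *v x)"
    and sum: "\<And>x. (\<Sum>\<mu>\<in>L. Pr \<mu> *v x) = x"
    and comm: "\<And>Y \<mu>. Y ** S = S ** Y \<Longrightarrow> Y ** Pr \<mu> = Pr \<mu> ** Y"
    using semisimple_spectral_projections J unfolding mult_jordan_decomp_def by metis
  have component: "Pr \<mu> *v v = 0" if "\<mu> \<noteq> \<nu>" for \<mu>
  proof (rule jordan_decomp_gen_eigenvector_zero[OF J that eigen])
    have "(A - mat \<nu>) ** Pr \<mu> = Pr \<mu> ** (A - mat \<nu>)"
      by (intro comm commute_diff_mat mult_jordan_decomp_commute[OF J])
    then show "((*v) (A - mat \<nu>) ^^ k) (Pr \<mu> *v v) = 0"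
      by (simp add: funpow_matrix_vector_commute v)
  qed
  have "S *v v = (\<Sum>\<mu>\<in>L. S *v (Pr \<mu> *v v))" by (metis sum matrix_vector_mul_sum)
  also have "\<dots> = (\<Sum>\<mu>\<in>L. \<nu> *s (Pr \<mu> *v v))"
    by (intro sum.cong refl) (metis eigen component vector_smult_rzero)
  also have "\<dots> = \<nu> *s v" by (simp add: sum_cmul sum)
  finally show ?thesis .
qed

lemma jordan_decomp_nilpotent_on_eigenspace:
  assumes J: "mult_jordan_decomp S U A" and m: "matpow (U - mat 1) m = 0"
    and y: "S *v y = \<mu> *s y"
  shows "((*v) (A - mat \<mu>) ^^ m) y = 0"
proof -
  define N where "N = U - mat 1"
  have A: "A = S ** U" and SU: "U ** S = S ** U" using J by (auto simp: mult_jordan_decomp_def)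
  have N_eigen: "S *v (N *v z) = \<mu> *s (N *v z)" if "S *v z = \<mu> *s z" for z
    using commute_diff_mat[OF SU, of 1] that
    by (metis N_def commuting_matrix_vector_mul vector_scalar_commute)
  have T: "(A - mat \<mu>) *v z = \<mu> *s (N *v z)" if "S *v z = \<mu> *s z" for z
    using that commuting_matrix_vector_mul[OF SU[symmetric]]
    by (simp add: A N_def matrix_vector_mul_assoc[symmetric] matrix_vector_mult_diff_rdistrib
        matrix_vector_mul_mat vector_scalar_commute vector_ssub_ldistrib)
  have "S *v z = \<mu> *s z \<Longrightarrow> ((*v) (A - mat \<mu>) ^^ j) z = \<mu> ^ j *s (((*v) N ^^ j) z)" for j z
  proof (induction j arbitrary: z)
    case (Suc j)
    have "((*v) (A - mat \<mu>) ^^ Suc j) z = ((*v) (A - mat \<mu>) ^^ j) (\<mu> *s (N *v z))"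
      by (simp add: funpow_Suc_right T[OF Suc.prems] del: funpow.simps)
    also have "\<dots> = \<mu> ^ Suc j *s (((*v) N ^^ Suc j) z)"
      by (simp add: funpow_matrix_vector_scale Suc.IH[OF N_eigen[OF Suc.prems]]
          funpow_Suc_right del: funpow.simps)
    finally show ?case .
  qed simp
  then show ?thesis using y m by (simp add: N_def matpow_matrix_vector_mul[symmetric])
qed

text \<open>The commutant of \<open>A\<close> preserves its generalised eigenspaces, which are the eigenspaces of \<open>S\<close>.\<close>
lemma jordan_decomp_semisimple_commute:
  assumes J: "mult_jordan_decomp S U A" and YA: "Y ** A = A ** Y"
  shows "Y ** S = S ** Y"
proof -
  obtain m where m: "matpow (U - mat 1) m = 0"
    using J unfolding mult_jordan_decomp_def unipotent_mat_def by blast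
  obtain Pr L where eigen: "\<And>\<mu> x. S *v (Pr \<mu> *v x) = \<mu> *s (Pr \<mu> *v x)"
    and sum: "\<And>x. (\<Sum>\<mu>\<in>L. Pr \<mu> *v x) = x"
    using semisimple_spectral_projections J unfolding mult_jordan_decomp_def by metis
  have Y_eigen: "S *v (Y *v y) = \<mu> *s (Y *v y)" if y: "S *v y = \<mu> *s y" for y \<mu>
  proof (rule jordan_decomp_gen_eigenvector[OF J])
    have "(A - mat \<mu>) ** Y = Y ** (A - mat \<mu>)" by (rule commute_diff_mat) (use YA in simp)
    then show "((*v) (A - mat \<mu>) ^^ m) (Y *v y) = 0"
      by (simp add: funpow_matrix_vector_commute jordan_decomp_nilpotent_on_eigenspace[OF J m y])
  qed
  have "Y *v (S *v x) = S *v (Y *v x)" for x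
  proof -
    have "Y *v (S *v x) = (\<Sum>\<mu>\<in>L. Y *v (S *v (Pr \<mu> *v x)))"
      by (metis sum matrix_vector_mul_sum)
    also have "\<dots> = (\<Sum>\<mu>\<in>L. S *v (Y *v (Pr \<mu> *v x)))"
      by (intro sum.cong refl) (simp add: eigen Y_eigen[OF eigen] vector_scalar_commute)
    also have "\<dots> = S *v (Y *v x)" by (metis sum matrix_vector_mul_sum)
    finally show ?thesis .
  qed
  then show ?thesis by (simp add: matrix_eq matrix_vector_mul_assoc[symmetric])
qed

section \<open>Simultaneous eigenvectors of commuting families\<close>

lemma finite_spanning_values:
  fixes f :: "'a \<Rightarrow> complex^'m::finite"
  obtains T where "finite T" and "\<And>u. \<exists>c. f u = (\<Sum>t\<in>T. c t *s f t)"
proof -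
  obtain B where B: "B \<subseteq> range f" "vec.independent B" "range f \<subseteq> vec.span B"
    using vec.maximal_independent_subset by blast
  have "finite B" using B(2) vec.finiteI_independent by blast
  define T where "T = inv_into UNIV f ` B"
  have fT: "f ` T = B" unfolding T_def by (rule image_inv_into_cancel[OF refl B(1)])
  have inj: "inj_on f T" unfolding T_def inj_on_def using B(1) by (auto simp: f_inv_into_f subset_eq)
  show ?thesis
  proof
    show "finite T" using \<open>finite B\<close> by (simp add: T_def)
    fix u
    obtain c where "f u = (\<Sum>v\<in>B. c v *s v)"
      using B(3) vec.span_finite[OF \<open>finite B\<close>] by auto
    also have "\<dots> = (\<Sum>t\<in>T. c (f t) *s f t)"
      unfolding fT[symmetric] by (rule sum.reindex[OF inj, unfolded comp_def])
    finally show "\<exists>c. f u = (\<Sum>t\<in>T. c t *s f t)" by (rule exI[of _ "c \<circ> f", unfolded comp_def])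
  qed
qed

lemma finite_spanning_matrices:
  fixes F :: "'a \<Rightarrow> complex^'n::finite^'m::finite"
  obtains T where "finite T" and "\<And>u. \<exists>c. \<forall>x. F u *v x = (\<Sum>t\<in>T. c t *s (F t *v x))"
proof -
  define f :: "'a \<Rightarrow> complex^('m \<times> 'n)" where "f u = (\<chi> p. F u $ fst p $ snd p)" for u
  obtain T where "finite T" and T: "\<And>u. \<exists>c. f u = (\<Sum>t\<in>T. c t *s f t)"
    using finite_spanning_values by blast
  show ?thesis
  proof (rule that[OF \<open>finite T\<close>])
    fix u
    obtain c where c: "f u = (\<Sum>t\<in>T. c t *s f t)" using T by blast
    have "F u $ i $ j = (\<Sum>t\<in>T. c t * F t $ i $ j)" for i j
      using arg_cong[OF c, of "\<lambda>v. v $ (i, j)"] by (simp add: f_def)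
    then have "F u *v x = (\<Sum>t\<in>T. c t *s (F t *v x))" for x
      by (simp add: vec_eq_iff matrix_vector_mult_def sum_distrib_left sum_distrib_right mult.assoc)
        (rule allI, rule sum.swap)
    then show "\<exists>c. \<forall>x. F u *v x = (\<Sum>t\<in>T. c t *s (F t *v x))" by blast
  qed
qed

lemma common_eigenvectors_span:
  fixes S :: "'a \<Rightarrow> complex^'n::finite^'n"
  assumes "finite T" and "\<And>t. t \<in> T \<Longrightarrow> semisimple_mat (S t)"
    and "\<And>t t'. t \<in> T \<Longrightarrow> t' \<in> T \<Longrightarrow> S t ** S t' = S t' ** S t"
  obtains X where "finite X" and "vec.span X = UNIV"
    and "\<And>x t. x \<in> X \<Longrightarrow> t \<in> T \<Longrightarrow> \<exists>l. S t *v x = l *s x"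
proof -
  have "\<exists>X. finite X \<and> vec.span X = UNIV \<and> (\<forall>x\<in>X. \<forall>t\<in>T. \<exists>l. S t *v x = l *s x)"
    using assms
  proof (induction T rule: finite_induct)
    case empty
    show ?case by (intro exI[of _ cart_basis]) (simp add: finite_cart_basis)
  next
    case (insert t F)
    then obtain X where X: "finite X" "vec.span X = UNIV"
      "\<And>x t'. x \<in> X \<Longrightarrow> t' \<in> F \<Longrightarrow> \<exists>l. S t' *v x = l *s x"
      by (metis insert_iff)
    obtain Pr L where "finite L" and eigen: "\<And>\<mu> x. S t *v (Pr \<mu> *v x) = \<mu> *s (Pr \<mu> *v x)"
      and sum: "\<And>x. (\<Sum>\<mu>\<in>L. Pr \<mu> *v x) = x"
      and comm: "\<And>Y \<mu>. Y ** S t = S t ** Y \<Longrightarrow> Y ** Pr \<mu> = Pr \<mu> ** Y"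
      using semisimple_spectral_projections insert.prems(1) by (metis insertI1)
    define X' where "X' = (\<lambda>(\<mu>, x). Pr \<mu> *v x) ` (L \<times> X)"
    have "X \<subseteq> vec.span X'"
    proof
      fix x assume "x \<in> X"
      then have "(\<Sum>\<mu>\<in>L. Pr \<mu> *v x) \<in> vec.span X'"
        by (intro vec.span_sum vec.span_base) (auto simp: X'_def)
      then show "x \<in> vec.span X'" by (simp only: sum)
    qed
    then have "vec.span X' = UNIV" using X(2) by (metis top_le vec.span_mono vec.span_span)
    moreover have "\<exists>l. S t' *v y = l *s y" if "y \<in> X'" and t': "t' \<in> insert t F" for y t'
    proof -
      obtain \<mu> x where y: "y = Pr \<mu> *v x" and "x \<in> X" using \<open>y \<in> X'\<close> by (auto simp: X'_def)
      show ?thesis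
      proof (cases "t' = t")
        case False
        then obtain l where l: "S t' *v x = l *s x" using X(3) \<open>x \<in> X\<close> t' by blast
        have "S t' ** Pr \<mu> = Pr \<mu> ** S t'" using t' by (intro comm insert.prems(2)) auto
        then have "S t' *v y = l *s y" by (simp add: y commuting_matrix_vector_mul l vector_scalar_commute)
        then show ?thesis by blast
      qed (use eigen y in blast)
    qed
    moreover have "finite X'" using \<open>finite L\<close> X(1) by (simp add: X'_def)
    ultimately show ?case by blast
  qed
  then show ?thesis using that by blast
qed

lemma funpow_last_nonzero:
  fixes f :: "'a \<Rightarrow> 'a::zero"
  assumes "(f ^^ k) z = 0" and "z \<noteq> 0"
  shows "\<exists>j. (f ^^ j) z \<noteq> 0 \<and> f ((f ^^ j) z) = 0"
  using assms(1)
proof (induction k)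
  case (Suc k)
  then show ?case by (cases "(f ^^ k) z = 0") auto
qed (use assms(2) in simp)

lemma commuting_nilpotent_common_kernel:
  fixes N :: "'a \<Rightarrow> complex^'n::finite^'n"
  assumes "finite T"
    and invariant: "\<And>t x. t \<in> T \<Longrightarrow> x \<in> W \<Longrightarrow> N t *v x \<in> W"
    and nilpotent: "\<And>t. t \<in> T \<Longrightarrow> \<exists>k. \<forall>x\<in>W. ((*v) (N t) ^^ k) x = 0"
    and comm: "\<And>t t'. t \<in> T \<Longrightarrow> t' \<in> T \<Longrightarrow> N t ** N t' = N t' ** N t"
    and "w \<in> W" "w \<noteq> 0"
  obtains z where "z \<in> W" "z \<noteq> 0" "\<And>t. t \<in> T \<Longrightarrow> N t *v z = 0"
proof -
  have "F \<subseteq> T \<Longrightarrow> \<exists>z\<in>W. z \<noteq> 0 \<and> (\<forall>t\<in>F. N t *v z = 0)" for F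
    using finite_subset[OF _ \<open>finite T\<close>]
  proof (induction F rule: infinite_finite_induct)
    case (insert t F)
    then obtain z where z: "z \<in> W" "z \<noteq> 0" "\<And>t'. t' \<in> F \<Longrightarrow> N t' *v z = 0" by auto
    have t: "t \<in> T" using insert.prems by auto
    obtain k where "((*v) (N t) ^^ k) z = 0" using nilpotent[OF t] z(1) by blast
    then obtain j where j: "((*v) (N t) ^^ j) z \<noteq> 0" "N t *v ((*v) (N t) ^^ j) z = 0"
      using funpow_last_nonzero z(2) by blast
    have "((*v) (N t) ^^ i) z \<in> W" for i by (induction i) (auto simp: z(1) invariant[OF t])
    moreover have "N t' *v ((*v) (N t) ^^ j) z = 0" if "t' \<in> F" for t'
    proof -
      have "N t ** N t' = N t' ** N t" using that insert.prems by (intro comm t) auto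
      then show ?thesis
        by (simp add: funpow_matrix_vector_commute[symmetric] z(3)[OF that] funpow_matrix_vector_zero)
    qed
    ultimately show ?case using j by blast
  qed (use assms(5,6) in auto)
  then show ?thesis using that by blast
qed

lemma jordan_decomp_common_eigenvector:
  fixes S U M :: "'a \<Rightarrow> complex^'n::finite^'n"
  assumes "finite T" and J: "\<And>t. t \<in> T \<Longrightarrow> mult_jordan_decomp (S t) (U t) (M t)"
    and comm: "\<And>t t'. t \<in> T \<Longrightarrow> t' \<in> T \<Longrightarrow> M t ** M t' = M t' ** M t"
    and w: "\<And>t. t \<in> T \<Longrightarrow> S t *v w = l t *s w" and "w \<noteq> 0"
  obtains z where "z \<noteq> 0" and "\<And>t. t \<in> T \<Longrightarrow> S t *v z = l t *s z"
    and "\<And>t. t \<in> T \<Longrightarrow> M t *v z = l t *s z"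
proof -
  define W where "W = {x. \<forall>t\<in>T. S t *v x = l t *s x}"
  define N where "N t = M t - mat (l t)" for t
  have invariant: "N t *v x \<in> W" if t: "t \<in> T" and "x \<in> W" for t x
  proof -
    have "S t' *v (N t *v x) = l t' *s (N t *v x)" if t': "t' \<in> T" for t'
    proof -
      have "M t ** S t' = S t' ** M t"
        by (rule jordan_decomp_semisimple_commute[OF J[OF t']]) (use comm t t' in simp)
      then have "N t ** S t' = S t' ** N t" unfolding N_def by (rule commute_diff_mat)
      then show ?thesis
        using \<open>x \<in> W\<close> t' by (simp add: W_def commuting_matrix_vector_mul[symmetric] vector_scalar_commute)
    qed
    then show ?thesis by (simp add: W_def)
  qed
  have nilpotent: "\<exists>k. \<forall>x\<in>W. ((*v) (N t) ^^ k) x = 0" if t: "t \<in> T" for t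
  proof -
    obtain m where "matpow (U t - mat 1) m = 0"
      using J[OF t] unfolding mult_jordan_decomp_def unipotent_mat_def by blast
    then show ?thesis
      using t by (auto simp: W_def N_def intro: jordan_decomp_nilpotent_on_eigenspace[OF J[OF t]])
  qed
  have N_comm: "N t ** N t' = N t' ** N t" if "t \<in> T" "t' \<in> T" for t t'
    unfolding N_def by (rule commute_diff_mat[OF commute_diff_mat[OF comm[OF that(2,1)], symmetric]])
  have "w \<in> W" using w by (simp add: W_def)
  obtain z where "z \<in> W" "z \<noteq> 0" "\<And>t. t \<in> T \<Longrightarrow> N t *v z = 0"
    by (rule commuting_nilpotent_common_kernel[OF \<open>finite T\<close>, of W N w])
      (use invariant nilpotent N_comm \<open>w \<in> W\<close> \<open>w \<noteq> 0\<close> in auto)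
  then show ?thesis
    by (intro that) (auto simp: W_def N_def matrix_vector_mult_diff_rdistrib matrix_vector_mul_mat)
qed

lemma jordan_decomp_shared_eigenvalue:
  assumes J: "mult_jordan_decomp S U A"
    and S: "\<And>x. S *v x = (\<Sum>t\<in>T1. c t *s (Ss t *v x))"
    and A: "\<And>x. A *v x = (\<Sum>t\<in>T2. c' t *s (As t *v x))"
    and w: "\<And>t. t \<in> T1 \<Longrightarrow> Ss t *v w = l t *s w"
    and z: "\<And>t. t \<in> T1 \<Longrightarrow> Ss t *v z = l t *s z" "\<And>t. t \<in> T2 \<Longrightarrow> As t *v z = l t *s z"
    and "z $ a \<noteq> 0"
  shows "S *v w = ((A *v z) $ a / z $ a) *s w"
proof -
  have Sz: "S *v z = (\<Sum>t\<in>T1. c t * l t) *s z" and Az: "A *v z = (\<Sum>t\<in>T2. c' t * l t) *s z"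
    using eigenvector_combination[OF S z(1)] eigenvector_combination[OF A z(2)] by auto
  have "z \<noteq> 0" using \<open>z $ a \<noteq> 0\<close> by auto
  then have "(\<Sum>t\<in>T1. c t * l t) = (\<Sum>t\<in>T2. c' t * l t)"
    by (rule jordan_decomp_eigenvalue_unique[OF J Sz Az])
  then show ?thesis using \<open>z $ a \<noteq> 0\<close> by (simp add: eigenvector_combination[OF S w] Az)
qed

lemma rational_common_eigenbasis:
  fixes S U M :: "complex \<Rightarrow> complex^'n::finite^'n"
  assumes rat: "rational_mat_fun M" and J: "\<And>u. mult_jordan_decomp (S u) (U u) (M u)"
    and comm: "\<And>u v. M u ** M v = M v ** M u"
  obtains X where "finite X" and "vec.span X = UNIV" and "0 \<notin> X"
    and "\<And>w. w \<in> X \<Longrightarrow> \<exists>\<sigma>. rational_fun \<sigma> \<and> (\<forall>u. S u *v w = \<sigma> u *s w)"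
proof -
  have MS: "M v ** S u = S u ** M v" for u v by (rule jordan_decomp_semisimple_commute[OF J comm])
  have SS: "S u ** S v = S v ** S u" for u v by (rule jordan_decomp_semisimple_commute[OF J MS[symmetric]])
  obtain T1 where "finite T1" and T1: "\<And>u. \<exists>c. \<forall>x. S u *v x = (\<Sum>t\<in>T1. c t *s (S t *v x))"
    using finite_spanning_matrices by metis
  obtain T2 where "finite T2" and T2: "\<And>u. \<exists>c. \<forall>x. M u *v x = (\<Sum>t\<in>T2. c t *s (M t *v x))"
    using finite_spanning_matrices by metis
  define T where "T = T1 \<union> T2"
  have "finite T" using \<open>finite T1\<close> \<open>finite T2\<close> by (simp add: T_def)
  have "semisimple_mat (S t)" for t using J by (simp add: mult_jordan_decomp_def)
  then obtain X where "finite X" "vec.span X = UNIV"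
    and X: "\<And>x t. x \<in> X \<Longrightarrow> t \<in> T \<Longrightarrow> \<exists>l. S t *v x = l *s x"
    using common_eigenvectors_span[OF \<open>finite T\<close>, of S] SS by blast
  have "\<exists>\<sigma>. rational_fun \<sigma> \<and> (\<forall>u. S u *v w = \<sigma> u *s w)" if w: "w \<in> X - {0}" for w
  proof -
    have "w \<in> X" and "w \<noteq> 0" using w by auto
    then have "\<forall>t\<in>T. \<exists>l. S t *v w = l *s w" using X by blast
    then obtain l where l: "\<And>t. t \<in> T \<Longrightarrow> S t *v w = l t *s w" using bchoice[of T] by metis
    obtain z where "z \<noteq> 0" and z: "\<And>t. t \<in> T \<Longrightarrow> S t *v z = l t *s z" "\<And>t. t \<in> T \<Longrightarrow> M t *v z = l t *s z"
      using jordan_decomp_common_eigenvector[where T=T and l=l and w=w, OF \<open>finite T\<close> J comm l \<open>w \<noteq> 0\<close>]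
      by blast
    obtain a where a: "z $ a \<noteq> 0" using \<open>z \<noteq> 0\<close> by (auto simp: vec_eq_iff)
    define \<sigma> where "\<sigma> u = (M u *v z) $ a / z $ a" for u
    have "rational_fun \<sigma>" unfolding \<sigma>_def by (rule rational_fun_matrix_vector_coordinate[OF rat])
    moreover have "S u *v w = \<sigma> u *s w" for u
    proof -
      obtain c where "\<And>x. S u *v x = (\<Sum>t\<in>T1. c t *s (S t *v x))" using T1 by blast
      moreover obtain c' where "\<And>x. M u *v x = (\<Sum>t\<in>T2. c' t *s (M t *v x))" using T2 by blast
      ultimately show ?thesis
        unfolding \<sigma>_def using l z a by (intro jordan_decomp_shared_eigenvalue[OF J]) (auto simp: T_def)
    qed
    ultimately show ?thesis by blast
  qed
  moreover have "vec.span (X - {0}) = UNIV" using \<open>vec.span X = UNIV\<close> by simp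
  ultimately show ?thesis using that[of "X - {0}"] \<open>finite X\<close> by blast
qed

lemma rational_mat_fun_eigenbasis:
  fixes F :: "complex \<Rightarrow> complex^'n::finite^'n"
  assumes "finite X" and "vec.span X = UNIV" and "\<And>w. w \<in> X \<Longrightarrow> rational_fun (\<sigma> w)"
    and eigen: "\<And>w u. w \<in> X \<Longrightarrow> F u *v w = \<sigma> w u *s w"
  shows "rational_mat_fun F"
proof (rule rational_mat_funI)
  fix i k
  obtain coef where coef: "axis k 1 = (\<Sum>w\<in>X. coef w *s w)"
    using vec.span_finite[OF \<open>finite X\<close>] \<open>vec.span X = UNIV\<close> by blast
  have "F u *v axis k 1 = (\<Sum>w\<in>X. coef w *s (\<sigma> w u *s w))" for u
    by (subst coef) (simp add: matrix_vector_mul_sum vector_scalar_commute eigen)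
  then have "(\<lambda>u. F u $ i $ k) = (\<lambda>u. \<Sum>w\<in>X. coef w * (\<sigma> w u * w $ i))"
    by (simp add: matrix_entry_axis[of "F _"] mult.assoc)
  then show "rational_fun (\<lambda>u. F u $ i $ k)"
    by (simp add: rational_fun_sum rational_fun_mult rational_fun_const assms(3))
qed

theorem lemma4p12:
  fixes M MS MU :: "complex \<Rightarrow> complex^'n::finite^'n"
  assumes rat: "rational_mat_fun M"
    and inv: "\<And>u. invertible (M u)"
    and comm: "\<And>u v. M u ** M v = M v ** M u"
    and jordan: "\<And>u. semisimple_mat (MS u) \<and> unipotent_mat (MU u) \<and>
                      MS u ** MU u = MU u ** MS u \<and> M u = MS u ** MU u"
  shows "rational_mat_fun MS \<and> rational_mat_fun MU"
proof -
  have J: "mult_jordan_decomp (MS u) (MU u) (M u)" for u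
    using jordan by (simp add: mult_jordan_decomp_def)
  obtain X where X: "finite X" "vec.span X = UNIV" "0 \<notin> X"
    and "\<forall>w\<in>X. \<exists>\<sigma>. rational_fun \<sigma> \<and> (\<forall>u. MS u *v w = \<sigma> u *s w)"
    by (rule rational_common_eigenbasis[OF rat J comm]) blast
  then obtain \<sigma> where \<sigma>: "\<And>w. w \<in> X \<Longrightarrow> rational_fun (\<sigma> w)"
    and eigen: "\<And>w u. w \<in> X \<Longrightarrow> MS u *v w = \<sigma> w u *s w"
    using bchoice[of X] by metis
  have MS_inv: "invertible (MS u)" for u
    using inv[of u] jordan[of u] by (metis invertible_mult_left)
  have "w \<noteq> 0" if "w \<in> X" for w using that X(3) by blast
  note inv_eigen = matrix_inv_eigenvector[OF MS_inv eigen this]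
  have "rational_mat_fun MS" by (rule rational_mat_fun_eigenbasis[OF X(1,2) \<sigma> eigen])
  moreover have "rational_mat_fun (\<lambda>u. matrix_inv (MS u) ** M u)"
  proof (rule rational_mat_fun_mult[OF _ rat])
    show "rational_mat_fun (\<lambda>u. matrix_inv (MS u))"
      by (rule rational_mat_fun_eigenbasis[OF X(1,2) _ inv_eigen(2)])
        (intro rational_fun_inverse \<sigma> inv_eigen(1))
  qed
  moreover have "matrix_inv (MS u) ** M u = MU u" for u
  proof -
    have "M u = MS u ** MU u" using jordan by blast
    then show ?thesis by (simp add: matrix_mul_assoc matrix_inv_left[OF MS_inv])
  qed
  ultimately show ?thesis by simp
qed

end
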